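(* Consider a symmetric two-player game $(X,\pi)$ with compact action set $X$ and payoff function of the form $\pi(x,y)=f(x)+g(y)+a(x,y)$ for some continuous functions $f,g:X\to\mathbb{R}$ and a symmetric function $a:X\times X\to\mathbb{R}$ (i.e. $a(x,y)=a(y,x)$ for all $x,y\in X$). Then imitation is essentially unbeatable.
   Context: $\pi(x,y)$ is the payoff of the player choosing $x$ against $y$ (assumed bounded). Relative payoff: $\Delta(x,y)=\pi(x,y)-\pi(y,x)$, and $\hat\Delta:=\max_{x,y\in X}\Delta(x,y)$. Imitate-the-best: given initial $y_0\in X$ and any opponent sequence $(x_t)_{t\ge0}$ in $X$, $y_t=x_{t-1}$ if $\Delta(x_{t-1},y_{t-1})>0$ and $y_t=y_{t-1}$ otherwise. Imitation is essentially unbeatable if for every $y_0\in X$ and every sequence $(x_t)$, $\limsup_{T\to\infty}\sum_{t=0}^T\Delta(x_t,y_t)\le\hat\Delta$. *)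

theory Defs
  imports "HOL-Analysis.Analysis" "HOL-Library.Liminf_Limsup"
begin

definition rel_payoff :: "('a \<Rightarrow> 'a \<Rightarrow> real) \<Rightarrow> 'a \<Rightarrow> 'a \<Rightarrow> real" where
  "rel_payoff \<pi> x y = \<pi> x y - \<pi> y x"

definition max_rel_payoff :: "'a set \<Rightarrow> ('a \<Rightarrow> 'a \<Rightarrow> real) \<Rightarrow> real" where
  "max_rel_payoff X \<pi> = (SUP p\<in>X \<times> X. rel_payoff \<pi> (fst p) (snd p))"

fun imitate :: "('a \<Rightarrow> 'a \<Rightarrow> real) \<Rightarrow> 'a \<Rightarrow> (nat \<Rightarrow> 'a) \<Rightarrow> nat \<Rightarrow> 'a" where
  "imitate \<pi> y0 xs 0 = y0"
| "imitate \<pi> y0 xs (Suc t) =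
     (if rel_payoff \<pi> (xs t) (imitate \<pi> y0 xs t) > 0 then xs t else imitate \<pi> y0 xs t)"

definition essentially_unbeatable :: "'a set \<Rightarrow> ('a \<Rightarrow> 'a \<Rightarrow> real) \<Rightarrow> bool" where
  "essentially_unbeatable X \<pi> \<longleftrightarrow>
     (\<forall>y0\<in>X. \<forall>xs. (\<forall>t. xs t \<in> X) \<longrightarrow>
        limsup (\<lambda>T. ereal (\<Sum>t\<le>T. rel_payoff \<pi> (xs t) (imitate \<pi> y0 xs t)))
          \<le> ereal (max_rel_payoff X \<pi>))"

end

theory Submission
  imports Defs
begin

text \<open>For payoffs of the form f x + g y + a x y with a symmetric, the relative payoff is
  exact: \<Delta>(x, y) = h x - h y with the potential h = f - g. Imitate-the-best then makes h
  along the imitator's path the running maximum of h, so each relative payoff is bounded by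
  the increment of h along that path and the cumulative relative payoff telescopes to
  h(y(T+1)) - h(y(0)) = \<Delta>(y(T+1), y(0)) \<le> \<hat>\<Delta>.\<close>

lemma imitate_mem:
  assumes "y0 \<in> X" "\<And>t. xs t \<in> X"
  shows "imitate \<pi> y0 xs t \<in> X"
  using assms by (induction t) auto

lemma rel_payoff_symmetric_decomposition:
  assumes "a x y = a y x"
    and "\<pi> x y = f x + g y + a x y" "\<pi> y x = f y + g x + a y x"
  shows "rel_payoff \<pi> x y = (f x - g x) - (f y - g y)"
  using assms unfolding rel_payoff_def by simp

lemma rel_payoff_le_max_rel_payoff:
  assumes "bounded ((\<lambda>p. \<pi> (fst p) (snd p)) ` (X \<times> X))" "x \<in> X" "y \<in> X"
  shows "rel_payoff \<pi> x y \<le> max_rel_payoff X \<pi>"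
proof -
  obtain B where B: "\<And>u v. u \<in> X \<Longrightarrow> v \<in> X \<Longrightarrow> \<bar>\<pi> u v\<bar> \<le> B"
    using assms(1) by (force simp: bounded_iff)
  have "bdd_above ((\<lambda>p. rel_payoff \<pi> (fst p) (snd p)) ` (X \<times> X))"
  proof (rule bdd_aboveI2)
    fix p assume "p \<in> X \<times> X"
    with B[of "fst p" "snd p"] B[of "snd p" "fst p"]
    show "rel_payoff \<pi> (fst p) (snd p) \<le> 2 * B"
      by (auto simp: rel_payoff_def mem_Times_iff)
  qed
  from cSUP_upper[OF _ this, of "(x, y)"] assms(2,3) show ?thesis
    unfolding max_rel_payoff_def by simp
qed

context
  fixes X :: "'a set" and \<pi> :: "'a \<Rightarrow> 'a \<Rightarrow> real" and h :: "'a \<Rightarrow> real"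
    and y0 :: 'a and xs :: "nat \<Rightarrow> 'a"
  assumes potential: "\<And>x y. x \<in> X \<Longrightarrow> y \<in> X \<Longrightarrow> rel_payoff \<pi> x y = h x - h y"
    and y0: "y0 \<in> X" and xs: "\<And>t. xs t \<in> X"
begin

lemma imitate_mem_actions: "imitate \<pi> y0 xs t \<in> X"
  using y0 xs by (rule imitate_mem)

lemma potential_imitate_Suc:
  "h (imitate \<pi> y0 xs (Suc t)) = max (h (xs t)) (h (imitate \<pi> y0 xs t))"
  using potential[OF xs imitate_mem_actions] by auto

lemma sum_rel_payoff_imitate_le_potential:
  "(\<Sum>t\<le>T. rel_payoff \<pi> (xs t) (imitate \<pi> y0 xs t)) \<le> h (imitate \<pi> y0 xs (Suc T)) - h y0"
proof (induction T)
  case 0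
  show ?case using potential[OF xs y0] potential_imitate_Suc[of 0] by simp
next
  case (Suc T)
  have "rel_payoff \<pi> (xs (Suc T)) (imitate \<pi> y0 xs (Suc T))
          \<le> h (imitate \<pi> y0 xs (Suc (Suc T))) - h (imitate \<pi> y0 xs (Suc T))"
    using potential[OF xs[of "Suc T"] imitate_mem_actions[of "Suc T"]]
      potential_imitate_Suc[of "Suc T"] by linarith
  with Suc show ?case by (simp del: imitate.simps)
qed

end

theorem essentially_unbeatable_if_potential:
  assumes potential: "\<And>x y. x \<in> X \<Longrightarrow> y \<in> X \<Longrightarrow> rel_payoff \<pi> x y = h x - h y"
    and bounded: "bounded ((\<lambda>p. \<pi> (fst p) (snd p)) ` (X \<times> X))"
  shows "essentially_unbeatable X \<pi>"
  unfolding essentially_unbeatable_def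
proof (intro ballI allI impI)
  fix y0 and xs :: "nat \<Rightarrow> 'a"
  assume y0: "y0 \<in> X" and "\<forall>t. xs t \<in> X"
  then have xs: "\<And>t. xs t \<in> X" by blast
  have "(\<Sum>t\<le>T. rel_payoff \<pi> (xs t) (imitate \<pi> y0 xs t)) \<le> max_rel_payoff X \<pi>" for T
  proof -
    let ?y = "imitate \<pi> y0 xs (Suc T)"
    have "(\<Sum>t\<le>T. rel_payoff \<pi> (xs t) (imitate \<pi> y0 xs t)) \<le> h ?y - h y0"
      by (rule sum_rel_payoff_imitate_le_potential[OF potential y0 xs])
    also have "\<dots> = rel_payoff \<pi> ?y y0"
      using potential[OF imitate_mem[of y0 X xs, OF y0 xs] y0] by (simp del: imitate.simps)
    also have "\<dots> \<le> max_rel_payoff X \<pi>"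
      by (rule rel_payoff_le_max_rel_payoff[OF bounded imitate_mem[of y0 X xs, OF y0 xs] y0])
    finally show ?thesis .
  qed
  then show "limsup (\<lambda>T. ereal (\<Sum>t\<le>T. rel_payoff \<pi> (xs t) (imitate \<pi> y0 xs t)))
               \<le> ereal (max_rel_payoff X \<pi>)"
    by (intro Limsup_bounded always_eventually) simp
qed

theorem corollary3:
  fixes X :: "'a::topological_space set"
    and \<pi> :: "'a \<Rightarrow> 'a \<Rightarrow> real"
    and f g :: "'a \<Rightarrow> real"
    and a :: "'a \<Rightarrow> 'a \<Rightarrow> real"
  assumes "compact X"
    and "continuous_on X f" and "continuous_on X g"
    and "\<And>x y. x \<in> X \<Longrightarrow> y \<in> X \<Longrightarrow> a x y = a y x"
    and "\<And>x y. x \<in> X \<Longrightarrow> y \<in> X \<Longrightarrow> \<pi> x y = f x + g y + a x y"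
    and "bounded ((\<lambda>p. \<pi> (fst p) (snd p)) ` (X \<times> X))"
  shows "essentially_unbeatable X \<pi>"
proof (rule essentially_unbeatable_if_potential[OF _ assms(6)])
  fix x y assume "x \<in> X" "y \<in> X"
  then show "rel_payoff \<pi> x y = (f x - g x) - (f y - g y)"
    using assms(4,5) by (intro rel_payoff_symmetric_decomposition) auto
qed

end
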